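(* Let $q\ge2$ and $a_1,\dots,a_q\in\,]0,\infty[$ such that not all $a_i$ are equal, and let $a=\mathrm{diag}(a_1,\dots,a_q)$. Then the functions $f_r:U(q,\mathbb F)\to\mathbb R$, $f_r(k)=\ln\Delta_r(k^*ak)$, $r=1,\dots,q-1$, together with the constant function $1$, are linearly independent over $\mathbb R$.
   Context: $\mathbb F\in\{\mathbb R,\mathbb C,\mathbb H\}$. $\Delta_r(x)$ is the $r$-th leading principal minor of a Hermitian matrix $x$ (Dieudonné determinant $\det A=(\det_{\mathbb C}A)^{1/2}$ for $\mathbb H$). *)

theory Defs
  imports "HOL-Analysis.Analysis" "Jordan_Normal_Form.Determinant"
begin

text \<open>All matrices over F are represented as
complex matrices: real/complex q x q matrices directly, and a quaternionic q x q matrix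
Z + W j (Z, W complex) by its standard complex 2q x 2q representation, in which the
quaternion entry z + w j at position (i,j) becomes the 2 x 2 block
[[z, w], [-cnj w, cnj z]] at rows 2i,2i+1 and columns 2j,2j+1.  This representation is
an injective real-algebra homomorphism compatible with the conjugate transpose.\<close>

datatype base_field = FR | FC | FH

definition fdim :: "base_field \<Rightarrow> nat" where
  "fdim F = (if F = FH then 2 else 1)"

definition F_mat :: "base_field \<Rightarrow> nat \<Rightarrow> complex mat \<Rightarrow> bool" where
  "F_mat F q M \<longleftrightarrow> M \<in> carrier_mat (fdim F * q) (fdim F * q) \<and>
     (F = FR \<longrightarrow> (\<forall>i<q. \<forall>j<q. Im (M $$ (i,j)) = 0)) \<and>
     (F = FH \<longrightarrow> (\<forall>i<q. \<forall>j<q.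
         M $$ (2*i+1, 2*j+1) = cnj (M $$ (2*i, 2*j)) \<and>
         M $$ (2*i+1, 2*j) = - cnj (M $$ (2*i, 2*j+1))))"

definition adj :: "complex mat \<Rightarrow> complex mat" where
  "adj A = mat (dim_col A) (dim_row A) (\<lambda>(i,j). cnj (A $$ (j,i)))"

definition unitary_grp :: "base_field \<Rightarrow> nat \<Rightarrow> complex mat set" where
  "unitary_grp F q = {k. F_mat F q k \<and> adj k * k = 1\<^sub>m (fdim F * q)}"

definition diag_F :: "base_field \<Rightarrow> nat \<Rightarrow> (nat \<Rightarrow> real) \<Rightarrow> complex mat" where
  "diag_F F q a = mat (fdim F * q) (fdim F * q)
     (\<lambda>(i,j). if i = j then complex_of_real (a (i div fdim F)) else 0)"

definition leading_block :: "nat \<Rightarrow> complex mat \<Rightarrow> complex mat" where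
  "leading_block n x = mat n n (\<lambda>(i,j). x $$ (i,j))"

text \<open>r-th leading principal minor of a Hermitian matrix over F; for H the Dieudonne
determinant (det_C)^(1/2) of the complex representation.\<close>
definition minor_F :: "base_field \<Rightarrow> nat \<Rightarrow> complex mat \<Rightarrow> real" where
  "minor_F F r x = (if F = FH then sqrt (Re (det (leading_block (2*r) x)))
                    else Re (det (leading_block r x)))"

definition f_F :: "base_field \<Rightarrow> nat \<Rightarrow> (nat \<Rightarrow> real) \<Rightarrow> nat \<Rightarrow> complex mat \<Rightarrow> real" where
  "f_F F q a r k = ln (minor_F F r (adj k * diag_F F q a * k))"

end

theory Submission
  imports Defs
begin

text \<open>It suffices to test a linear relation on the permutation matrices of U(q,F), for which
k* a k is diagonal with the a_i permuted, so that f_r(k_s) = \<Sum>_{i<r} ln a_{s(i)}. Comparing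
the identity with the transposition of x and y turns a relation
c_0 + \<Sum>_r c_r f_r = 0 into (ln a_y - ln a_x)(P_y - P_x) = 0, where P_t = \<Sum>_{1\<le>r\<le>t} c_r.
Hence P_x = P_y whenever a_x \<noteq> a_y, and since the a_i are not all equal, P is constant, i.e.
all c_r with r \<ge> 1 vanish; evaluating at the identity then gives c_0 = 0.\<close>

definition perm_mat :: "nat \<Rightarrow> (nat \<Rightarrow> nat) \<Rightarrow> complex mat" where
  "perm_mat n \<sigma> = mat n n (\<lambda>(i,j). if i = \<sigma> j then 1 else 0)"

lemma adj_perm_mat_mult_diag_mult_perm_mat:
  assumes \<sigma>: "bij_betw \<sigma> {..<n} {..<n}"
  shows "adj (perm_mat n \<sigma>) * mat_diag n w * perm_mat n \<sigma> = mat_diag n (w \<circ> \<sigma>)"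
proof (rule eq_matI)
  fix j j' assume "j < dim_row (mat_diag n (w \<circ> \<sigma>))" "j' < dim_col (mat_diag n (w \<circ> \<sigma>))"
  then have j: "j < n" "j' < n" by (simp_all add: mat_diag_def)
  then have \<sigma>j: "\<sigma> j < n" "\<sigma> j' < n" using bij_betwE[OF \<sigma>] by auto
  have dims: "dim_row (mat_diag n w) = n" "dim_col (mat_diag n w) = n"
    by (simp_all add: mat_diag_def)
  have adj_diag: "(adj (perm_mat n \<sigma>) * mat_diag n w) $$ (j, l) = (if l = \<sigma> j then w l else 0)"
    if "l < n" for l
    using j \<sigma>j that by (simp add: perm_mat_def adj_def mat_diag_def scalar_prod_def
        if_distrib[of "\<lambda>x. x * _"] if_distrib[of cnj] atLeast0LessThan cong: if_cong)
  have "(adj (perm_mat n \<sigma>) * mat_diag n w * perm_mat n \<sigma>) $$ (j, j')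
      = (\<Sum>l<n. (if l = \<sigma> j then w l else 0) * (if l = \<sigma> j' then 1 else 0))"
    using j adj_diag dims by (simp add: perm_mat_def adj_def scalar_prod_def atLeast0LessThan)
  also have "\<dots> = (if \<sigma> j = \<sigma> j' then w (\<sigma> j) else 0)"
    using \<sigma>j by (simp add: if_distrib[of "\<lambda>x. x * _"] cong: if_cong)
  also have "\<dots> = mat_diag n (w \<circ> \<sigma>) $$ (j, j')"
    using j \<sigma> by (auto simp: mat_diag_def bij_betw_def dest: inj_onD)
  finally show "(adj (perm_mat n \<sigma>) * mat_diag n w * perm_mat n \<sigma>) $$ (j, j')
      = mat_diag n (w \<circ> \<sigma>) $$ (j, j')" .
qed (auto simp: adj_def perm_mat_def mat_diag_def)

lemma adj_perm_mat_mult_perm_mat: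
  assumes "bij_betw \<sigma> {..<n} {..<n}"
  shows "adj (perm_mat n \<sigma>) * perm_mat n \<sigma> = 1\<^sub>m n"
  using adj_perm_mat_mult_diag_mult_perm_mat[OF assms, of "\<lambda>_. 1"]
  by (simp add: perm_mat_def adj_def)

text \<open>In the complex representation each of the q coordinates of F^q occupies a block of
d = fdim F consecutive indices; a permutation s of the coordinates permutes these blocks.\<close>

definition block_perm :: "nat \<Rightarrow> (nat \<Rightarrow> nat) \<Rightarrow> nat \<Rightarrow> nat" where
  "block_perm d s j = d * s (j div d) + j mod d"

lemma block_perm_div: "d > 0 \<Longrightarrow> block_perm d s j div d = s (j div d)"
  by (simp add: block_perm_def)

lemma block_perm_mod: "d > 0 \<Longrightarrow> block_perm d s j mod d = j mod d"
  by (simp add: block_perm_def)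

lemma bij_betw_block_perm:
  assumes s: "bij_betw s {..<q} {..<q}" and d: "d > 0"
  shows "bij_betw (block_perm d s) {..<d * q} {..<d * q}"
proof -
  have div_lt: "j div d < q" if "j < d * q" for j
    using that by (simp add: less_mult_imp_div_less mult.commute)
  have into: "block_perm d s ` {..<d * q} \<subseteq> {..<d * q}"
  proof
    fix i assume "i \<in> block_perm d s ` {..<d * q}"
    then obtain j where j: "j < d * q" and i: "i = block_perm d s j" by auto
    have "s (j div d) < q" using bij_betwE[OF s] div_lt[OF j] by blast
    then have "d * s (j div d) + d \<le> d * q" using mult_le_mono2[of "s (j div d) + 1" q d] by simp
    moreover have "j mod d < d" using d by simp
    ultimately show "i \<in> {..<d * q}" using i by (simp add: block_perm_def)
  qed
  have "inj_on (block_perm d s) {..<d * q}"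
  proof (rule inj_onI)
    fix j j' assume j: "j \<in> {..<d * q}" "j' \<in> {..<d * q}"
      and eq: "block_perm d s j = block_perm d s j'"
    have "s (j div d) = s (j' div d)" using arg_cong[OF eq, of "\<lambda>i. i div d"] d
      by (simp add: block_perm_div)
    then have "j div d = j' div d" using s j div_lt by (auto simp: bij_betw_def dest: inj_onD)
    moreover have "j mod d = j' mod d" using arg_cong[OF eq, of "\<lambda>i. i mod d"] d
      by (simp add: block_perm_mod)
    ultimately show "j = j'" by (metis div_mult_mod_eq)
  qed
  with into show ?thesis by (simp add: bij_betw_def endo_inj_surj)
qed

definition unitary_perm :: "base_field \<Rightarrow> nat \<Rightarrow> (nat \<Rightarrow> nat) \<Rightarrow> complex mat" where
  "unitary_perm F q s = perm_mat (fdim F * q) (block_perm (fdim F) s)"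

lemma fdim_pos: "fdim F > 0"
  by (simp add: fdim_def)

lemma F_mat_unitary_perm: "F_mat F q (unitary_perm F q s)"
proof -
  have "unitary_perm F q s $$ (2*i+1, 2*j+1) = cnj (unitary_perm F q s $$ (2*i, 2*j)) \<and>
        unitary_perm F q s $$ (2*i+1, 2*j) = - cnj (unitary_perm F q s $$ (2*i, 2*j+1))"
    if "F = FH" "i < q" "j < q" for i j
    using that by (simp add: unitary_perm_def perm_mat_def block_perm_def fdim_def)
  then show ?thesis
    by (auto simp: F_mat_def unitary_perm_def perm_mat_def fdim_def)
qed

lemma unitary_perm_in_unitary_grp:
  assumes "bij_betw s {..<q} {..<q}"
  shows "unitary_perm F q s \<in> unitary_grp F q"
  using F_mat_unitary_perm adj_perm_mat_mult_perm_mat[OF bij_betw_block_perm[OF assms fdim_pos]]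
  by (simp add: unitary_grp_def unitary_perm_def)

lemma det_leading_block_mat_diag:
  assumes "m \<le> n"
  shows "det (leading_block m (mat_diag n g)) = (\<Prod>j<m. g j)"
proof -
  have B: "leading_block m (mat_diag n g) = mat_diag m g"
    using assms by (auto simp: leading_block_def mat_diag_def)
  have "upper_triangular (mat_diag m g)"
    by (simp add: upper_triangular_def mat_diag_def)
  then have "det (mat_diag m g) = prod_list (diag_mat (mat_diag m g))"
    by (rule det_upper_triangular[OF _ mat_diag_dim])
  then show ?thesis
    unfolding B by (simp add: prod_list_diag_prod mat_diag_def atLeast0LessThan)
qed

lemma prod_lessThan_double_div2:
  fixes g :: "nat \<Rightarrow> 'a::comm_monoid_mult"
  shows "(\<Prod>j<2 * r. g (j div 2)) = (\<Prod>i<r. g i)^2"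
  by (induction r) (simp_all add: power2_eq_square mult_ac)

lemma minor_F_mat_diag_block:
  assumes "r \<le> q" and pos: "\<forall>i<r. g i > 0"
  shows "minor_F F r (mat_diag (fdim F * q) (\<lambda>j. complex_of_real (g (j div fdim F))))
       = (\<Prod>i<r. g i)"
proof (cases "F = FH")
  case True
  have "0 \<le> (\<Prod>i<r. g i)" using pos by (intro prod_nonneg) (auto intro: less_imp_le)
  with True assms show ?thesis
    by (simp add: minor_F_def fdim_def det_leading_block_mat_diag prod_lessThan_double_div2
        flip: of_real_prod)
qed (use assms in \<open>simp add: minor_F_def fdim_def det_leading_block_mat_diag flip: of_real_prod\<close>)

lemma diag_F_eq_mat_diag:
  "diag_F F q a = mat_diag (fdim F * q) (\<lambda>j. complex_of_real (a (j div fdim F)))"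
  unfolding diag_F_def mat_diag_def by (rule eq_matI) auto

lemma f_F_unitary_perm:
  assumes s: "s permutes {..<q}" and a: "\<forall>i<q. a i > 0" and "r \<le> q"
  shows "f_F F q a r (unitary_perm F q s) = (\<Sum>i<r. ln (a (s i)))"
proof -
  let ?d = "fdim F"
  have pos: "\<forall>i<r. a (s i) > 0" using assms permutes_in_image[OF s] by simp
  have "adj (unitary_perm F q s) * diag_F F q a * unitary_perm F q s
      = mat_diag (?d * q) ((\<lambda>j. complex_of_real (a (j div ?d))) \<circ> block_perm ?d s)"
    using adj_perm_mat_mult_diag_mult_perm_mat[OF bij_betw_block_perm[OF permutes_imp_bij[OF s]
          fdim_pos]]
    by (simp add: unitary_perm_def diag_F_eq_mat_diag)
  also have "\<dots> = mat_diag (?d * q) (\<lambda>j. complex_of_real (a (s (j div ?d))))"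
    by (simp add: comp_def block_perm_div[OF fdim_pos])
  finally have "f_F F q a r (unitary_perm F q s) = ln (\<Prod>i<r. a (s i))"
    using minor_F_mat_diag_block[of r q "\<lambda>i. a (s i)" F] pos assms(3) by (simp add: f_F_def)
  also have "\<dots> = (\<Sum>i<r. ln (a (s i)))"
    using pos by (subst ln_prod) auto
  finally show ?thesis .
qed

lemma sum_lessThan_transpose:
  fixes b :: "nat \<Rightarrow> 'a::comm_ring_1"
  shows "(\<Sum>i<r. b (Transposition.transpose x y i))
       = (\<Sum>i<r. b i) + (b y - b x) * (of_bool (x < r) - of_bool (y < r))"
proof (cases "x = y")
  case False
  have "(\<Sum>i<r. b (Transposition.transpose x y i)) - (\<Sum>i<r. b i)
      = (\<Sum>i<r. (if i = x then b y - b x else 0) + (if i = y then b x - b y else 0))"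
    unfolding sum_subtractf[symmetric] using False by (intro sum.cong) auto
  also have "\<dots> = (b y - b x) * (of_bool (x < r) - of_bool (y < r))"
    by (simp add: sum.distrib algebra_simps)
  finally show ?thesis by (simp add: algebra_simps)
qed simp

lemma eq_if_eq_where_values_differ:
  assumes "\<forall>x\<in>A. \<forall>y\<in>A. g x \<noteq> g y \<longrightarrow> f x = f y"
    and "\<exists>u\<in>A. \<exists>v\<in>A. g u \<noteq> g v"
    and "x \<in> A" "y \<in> A"
  shows "f x = f y"
proof -
  obtain u v where uv: "u \<in> A" "v \<in> A" "g u \<noteq> g v" using assms(2) by blast
  have "f z = f u" if "z \<in> A" for z
    using assms(1) uv that by (cases "g z = g u") metis+
  then show ?thesis using assms(3,4) by simp
qed

lemma coeffs_zero_if_vanishing_on_perms: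
  fixes b c :: "nat \<Rightarrow> real"
  assumes rel: "\<And>s. s permutes {..<q} \<Longrightarrow> c 0 + (\<Sum>r = 1..q-1. c r * (\<Sum>i<r. b (s i))) = 0"
    and nonconst: "\<exists>x<q. \<exists>y<q. b x \<noteq> b y"
  shows "\<forall>r<q. c r = 0"
proof -
  define P where "P t = (\<Sum>r = 1..q-1. if r \<le> t then c r else 0)" for t
  have P_eq: "P x = P y" if xy: "x < q" "y < q" "b x \<noteq> b y" for x y
  proof -
    have "0 = (\<Sum>r = 1..q-1. c r * (\<Sum>i<r. b (Transposition.transpose x y i)))
            - (\<Sum>r = 1..q-1. c r * (\<Sum>i<r. b i))"
      using rel[of id] rel[OF permutes_swap_id[of x "{..<q}" y]] xy by simp
    also have "\<dots> = (\<Sum>r = 1..q-1. (b y - b x) * ((if r \<le> y then c r else 0)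
                                               - (if r \<le> x then c r else 0)))"
      unfolding sum_subtractf[symmetric]
      by (intro sum.cong) (auto simp: sum_lessThan_transpose algebra_simps)
    also have "\<dots> = (b y - b x) * (P y - P x)"
      unfolding P_def by (simp only: sum_distrib_left[symmetric] sum_subtractf)
    finally show ?thesis using xy by simp
  qed
  have P_zero: "P t = 0" if "t < q" for t
  proof -
    have "P t = P 0"
    proof (rule eq_if_eq_where_values_differ[where g = b])
      show "\<forall>x\<in>{..<q}. \<forall>y\<in>{..<q}. b x \<noteq> b y \<longrightarrow> P x = P y" using P_eq by blast
      show "\<exists>u\<in>{..<q}. \<exists>v\<in>{..<q}. b u \<noteq> b v" using nonconst by blast
    qed (use that in auto)
    also have "P 0 = 0" by (simp add: P_def)
    finally show ?thesis .
  qed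
  have c_pos_index_zero: "c r = 0" if r: "1 \<le> r" "r < q" for r
  proof -
    have "P r - P (r - 1) = (\<Sum>r' = 1..q-1. if r' = r then c r' else 0)"
      unfolding P_def sum_subtractf[symmetric] by (intro sum.cong) auto
    moreover have "r \<le> q - 1" using r by simp
    ultimately show ?thesis using P_zero r by simp
  qed
  then have "(\<Sum>r = 1..q-1. c r * (\<Sum>i<r. b i)) = 0" by (intro sum.neutral) auto
  then have "c 0 = 0" using rel[of id] by simp
  with c_pos_index_zero show ?thesis by (metis less_one not_less)
qed

theorem lemma4p6:
  fixes F :: base_field and q :: nat and a :: "nat \<Rightarrow> real"
  assumes "q \<ge> 2"
    and "\<forall>i<q. a i > 0"
    and "\<exists>i<q. \<exists>j<q. a i \<noteq> a j"
  shows "\<forall>c :: nat \<Rightarrow> real.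
           (\<forall>k \<in> unitary_grp F q. c 0 + (\<Sum>r = 1..q-1. c r * f_F F q a r k) = 0)
           \<longrightarrow> (\<forall>r<q. c r = 0)"
proof (rule allI, rule impI)
  fix c :: "nat \<Rightarrow> real"
  assume rel: "\<forall>k \<in> unitary_grp F q. c 0 + (\<Sum>r = 1..q-1. c r * f_F F q a r k) = 0"
  have "c 0 + (\<Sum>r = 1..q-1. c r * (\<Sum>i<r. ln (a (s i)))) = 0" if s: "s permutes {..<q}" for s
  proof -
    have "c 0 + (\<Sum>r = 1..q-1. c r * f_F F q a r (unitary_perm F q s)) = 0"
      using rel unitary_perm_in_unitary_grp[OF permutes_imp_bij[OF s]] by blast
    moreover have "(\<Sum>r = 1..q-1. c r * f_F F q a r (unitary_perm F q s))
        = (\<Sum>r = 1..q-1. c r * (\<Sum>i<r. ln (a (s i))))"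
      using f_F_unitary_perm[OF s assms(2)] by (intro sum.cong) auto
    ultimately show ?thesis by simp
  qed
  moreover have "\<exists>x<q. \<exists>y<q. ln (a x) \<noteq> ln (a y)"
    using assms(2,3) by (metis ln_inj_iff)
  ultimately show "\<forall>r<q. c r = 0"
    by (rule coeffs_zero_if_vanishing_on_perms)
qed

end
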